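(* Let $(\mathbf d_n)$ be a family of degree sequences and $(k_n)$ positive integers with $k_n\le n$ and $k_n=o\big((n^2/m_2)^{2/3}\big)$ as $n\to\infty$. With $k=k_n$, $\alpha=k/n$ and $\lambda=\sum_{j=1}^n\frac{\alpha d_j}{\alpha d_j+1}$, \[g_n(k)=(1-\alpha)^{n-k}\Big(\prod_{j=1}^n(\alpha d_j+1)\Big)e^{k-\lambda}\Big(\frac{\lambda}{k}\Big)^k\Big(1+O\Big(\frac{k^{3/2}m_2}{n^2}\Big)\Big).\]
   Context: A degree sequence is $\mathbf d_n=(d_1,\ldots,d_n)\in\mathbb N_0^n$ with $\sum_j d_j=n$ (dependence on $n$ suppressed); $m_j=\sum_i d_i^j$. $\langle n\rangle_k=n!/(n-k)!$ and $g_n(k)=\frac{k!}{\langle n\rangle_k}\sum_{1\le i_1<\cdots<i_k\le n}\prod_{j=1}^k d_{i_j}$. Asymptotics are as $n\to\infty$. *)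

theory Defs
  imports "HOL-Analysis.Analysis" "HOL-Library.Landau_Symbols"
begin

definition is_degree_seq :: "nat \<Rightarrow> (nat \<Rightarrow> nat) \<Rightarrow> bool" where
  "is_degree_seq n d \<longleftrightarrow> (\<Sum>j=1..n. d j) = n"

definition moment :: "nat \<Rightarrow> (nat \<Rightarrow> nat) \<Rightarrow> nat \<Rightarrow> real" where
  "moment n d p = (\<Sum>i=1..n. real (d i) ^ p)"

definition falling :: "nat \<Rightarrow> nat \<Rightarrow> real" where
  "falling n k = fact n / fact (n - k)"

definition gfun :: "nat \<Rightarrow> (nat \<Rightarrow> nat) \<Rightarrow> nat \<Rightarrow> real" where
  "gfun n d k = fact k / falling n k *
     (\<Sum>S\<in>{S. S \<subseteq> {1..n} \<and> card S = k}. \<Prod>j\<in>S. real (d j))"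

end

theory Submission
  imports Defs
begin

text \<open>Since \<open>g\<^sub>n(k)\<close> is the elementary symmetric function \<open>e\<^sub>k(d)\<close> divided by \<open>n choose k\<close>, it
  can be written through two Poisson-binomial laws: if \<open>S\<close> counts independent events of
  probabilities \<open>\<alpha>d\<^sub>j/(\<alpha>d\<^sub>j+1)\<close> and \<open>B\<close> counts \<open>n\<close> independent events of probability \<open>\<alpha>\<close>, then
  \<open>P(S = k) = \<alpha>\<^sup>k e\<^sub>k(d) / \<Prod>(\<alpha>d\<^sub>j+1)\<close> and \<open>P(B = k) = (n choose k) \<alpha>\<^sup>k (1-\<alpha>)\<^sup>n\<^sup>-\<^sup>k\<close>, whence
  \<open>g\<^sub>n(k) = (1-\<alpha>)\<^sup>n\<^sup>-\<^sup>k \<Prod>(\<alpha>d\<^sub>j+1) P(S = k) / P(B = k)\<close>.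

  Comparing the characteristic function \<open>\<Prod>(1 - p\<^sub>j + p\<^sub>j e\<^sup>i\<^sup>t)\<close> factor by factor with
  \<open>exp(\<lambda>(e\<^sup>i\<^sup>t - 1))\<close> and inverting the Fourier series gives the local Poisson approximation
  \<open>|P(S = k) - Pois\<^sub>\<lambda>(k)| = O(\<Sum>p\<^sub>j\<^sup>2 / \<mu>\<^sup>3\<^sup>/\<^sup>2)\<close> with \<open>\<mu> = \<Sum>p\<^sub>j(1-p\<^sub>j)\<close>. For both \<open>S\<close> and \<open>B\<close>
  the mean lies in \<open>[k - \<alpha>\<^sup>2m\<^sub>2, k]\<close>, and \<open>\<alpha>\<^sup>2m\<^sub>2 = \<surd>k \<cdot> k\<^sup>3\<^sup>/\<^sup>2m\<^sub>2/n\<^sup>2\<close> is small against \<open>\<surd>k\<close>, so by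
  Stirling's bound both Poisson probabilities at \<open>k\<close> are at least of order \<open>1/\<surd>k\<close>. Hence both
  approximations hold with relative error \<open>O(k\<^sup>3\<^sup>/\<^sup>2m\<^sub>2/n\<^sup>2)\<close>, and the quotient of the two Poisson
  probabilities is exactly \<open>e\<^sup>k\<^sup>-\<^sup>\<lambda>(\<lambda>/k)\<^sup>k\<close>.\<close>

lemma DERIV_nonneg_imp_ge_at_0:
  fixes f f' :: "real \<Rightarrow> real"
  assumes "0 \<le> u" "\<And>x. 0 \<le> x \<Longrightarrow> (f has_real_derivative f' x) (at x)" "\<And>x. 0 \<le> x \<Longrightarrow> 0 \<le> f' x"
  shows "f 0 \<le> f u"
  using assms by (intro DERIV_nonneg_imp_nondecreasing[OF assms(1)]) blast

lemma cos_Taylor_bounds: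
  fixes x :: real assumes "0 \<le> x"
  shows "1 - x^2/2 \<le> cos x" "cos x \<le> 1 - x^2/2 + x^4/24"
proof -
  have cos_ge: "1 - u^2/2 \<le> cos u" if "0 \<le> u" for u :: real
  proof -
    have "(\<lambda>x. cos x - 1 + x^2/2) 0 \<le> (\<lambda>x. cos x - 1 + x^2/2) u"
      by (rule DERIV_nonneg_imp_ge_at_0[where f'="\<lambda>x. - sin x + x"])
         (use that sin_x_le_x in \<open>auto intro!: derivative_eq_intros\<close>)
    thus ?thesis by simp
  qed
  have sin_ge: "u - u^3/6 \<le> sin u" if "0 \<le> u" for u :: real
  proof -
    have "(\<lambda>x. sin x - x + x^3/6) 0 \<le> (\<lambda>x. sin x - x + x^3/6) u"
      by (rule DERIV_nonneg_imp_ge_at_0[where f'="\<lambda>x. cos x - 1 + x^2/2"])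
         (use that cos_ge in \<open>auto intro!: derivative_eq_intros simp: field_simps\<close>)
    thus ?thesis by simp
  qed
  have "(\<lambda>x. 1 - x^2/2 + x^4/24 - cos x) 0 \<le> (\<lambda>x. 1 - x^2/2 + x^4/24 - cos x) x"
    by (rule DERIV_nonneg_imp_ge_at_0[where f'="\<lambda>x. - x + x^3/6 + sin x"])
       (use assms sin_ge in \<open>auto intro!: derivative_eq_intros simp: field_simps\<close>)
  thus "cos x \<le> 1 - x^2/2 + x^4/24" by simp
  show "1 - x^2/2 \<le> cos x" using cos_ge assms .
qed

lemma one_minus_cos_bounds:
  fixes x :: real assumes "\<bar>x\<bar> \<le> pi"
  shows "x^2/12 \<le> 1 - cos x" "1 - cos x \<le> x^2/2"
proof -
  have "\<bar>x\<bar>^2 \<le> pi^2" using assms by (intro power_mono) auto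
  also have "pi^2 \<le> 10"
  proof -
    have p: "pi \<le> 3.15" using pi_approx(2) by (simp add: divide_simps)
    have "pi * pi \<le> 3.15 * 3.15" by (rule mult_mono[OF p p]) (use pi_gt_zero in auto)
    thus ?thesis by (simp add: power2_eq_square)
  qed
  finally have "x^2 \<le> 10" by simp
  hence "x^4 \<le> 10 * x^2"
    by (metis mult_right_mono power_add numeral_Bit0 zero_le_power2)
  moreover have "cos x \<le> 1 - x^2/2 + x^4/24" using cos_Taylor_bounds(2)[of "\<bar>x\<bar>"] by simp
  ultimately show "x^2/12 \<le> 1 - cos x" by linarith
  show "1 - cos x \<le> x^2/2" using cos_Taylor_bounds(1)[of "\<bar>x\<bar>"] by simp
qed

lemma exp_neg_le_inverse_square:
  fixes y :: real assumes "0 \<le> y"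
  shows "exp (-y) \<le> 1 / (1 + y/2)^2"
proof -
  have "(1 + y/2)^2 \<le> exp (y/2)^2"
    using assms exp_ge_add_one_self[of "y/2"] by (intro power_mono) auto
  also have "exp (y/2)^2 = exp y" by (simp add: power2_eq_square flip: exp_add)
  finally show ?thesis using assms by (simp add: exp_minus field_simps)
qed

lemma exp_minus_one_minus_le:
  fixes y :: real assumes "0 \<le> y"
  shows "exp y - 1 - y \<le> y^2 * exp y"
proof -
  have aux: "0 \<le> exp u * (u^2 + 2*u - 1) + 1" if "0 \<le> u" for u :: real
  proof -
    have "(\<lambda>x. exp x * (x^2 + 2*x - 1) + 1) 0 \<le> (\<lambda>x. exp x * (x^2 + 2*x - 1) + 1) u"
      by (rule DERIV_nonneg_imp_ge_at_0[where f'="\<lambda>x. exp x * (x^2 + 4*x + 1)"])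
         (use that in \<open>auto intro!: derivative_eq_intros simp: algebra_simps power2_eq_square\<close>)
    thus ?thesis by simp
  qed
  have "(\<lambda>x. x^2 * exp x - exp x + 1 + x) 0 \<le> (\<lambda>x. x^2 * exp x - exp x + 1 + x) y"
    by (rule DERIV_nonneg_imp_ge_at_0[where f'="\<lambda>x. exp x * (x^2 + 2*x - 1) + 1"])
       (use assms aux in \<open>auto intro!: derivative_eq_intros simp: algebra_simps power2_eq_square\<close>)
  thus ?thesis by simp
qed

lemma exp_2_le_9: "exp (2::real) \<le> 9"
proof -
  have "exp (2::real) = exp 1 * exp 1" by (simp flip: exp_add)
  also have "\<dots> \<le> 3 * 3" using exp_le by (intro mult_mono) auto
  finally show ?thesis by simp
qed

lemma sqrt_le_self:
  fixes x :: real assumes "1 \<le> x"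
  shows "sqrt x \<le> x"
  by (rule real_le_lsqrt) (use assms in \<open>auto simp: power2_eq_square\<close>)

lemma norm_exp_minus_partial_sum_le:
  fixes z :: complex
  shows "norm (exp z - (\<Sum>r<N. z^r /\<^sub>R fact r)) \<le> exp (norm z) - (\<Sum>r<N. norm z ^ r / fact r)"
proof -
  have sn: "summable (\<lambda>n. norm (z^n /\<^sub>R fact n))" by (rule summable_norm_exp)
  have nn: "norm (z^n /\<^sub>R fact n) = norm z ^ n / fact n" for n by (simp add: norm_power field_simps)
  have "exp z - (\<Sum>r<N. z^r /\<^sub>R fact r) = (\<Sum>n. z^(n+N) /\<^sub>R fact (n+N))"
    using suminf_split_initial_segment[OF summable_exp_generic, of z N] by (simp add: exp_def)
  moreover have "exp (norm z) - (\<Sum>r<N. norm z ^ r / fact r) = (\<Sum>n. norm z ^ (n+N) / fact (n+N))"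
    using suminf_split_initial_segment[OF sn[unfolded nn], of N]
    by (simp add: exp_def divide_inverse mult.commute)
  moreover have "norm (\<Sum>n. z^(n+N) /\<^sub>R fact (n+N)) \<le> (\<Sum>n. norm z ^ (n+N) / fact (n+N))"
    using summable_norm[OF summable_ignore_initial_segment[OF sn]] unfolding nn .
  ultimately show ?thesis by simp
qed

lemma norm_prod_diff_le_weighted:
  fixes a b :: "'i \<Rightarrow> 'a::{real_normed_algebra_1, comm_monoid_mult}"
  assumes "finite I" "\<And>j. j \<in> I \<Longrightarrow> norm (a j) \<le> M j" "\<And>j. j \<in> I \<Longrightarrow> norm (b j) \<le> M j"
  shows "norm ((\<Prod>j\<in>I. a j) - (\<Prod>j\<in>I. b j)) \<le> (\<Sum>j\<in>I. norm (a j - b j) * (\<Prod>i\<in>I-{j}. M i))"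
  using assms
proof (induction I rule: finite_induct)
  case empty
  then show ?case by simp
next
  case (insert x F)
  have M_nonneg: "0 \<le> M i" if "i \<in> insert x F" for i
    using insert.prems(1)[OF that] norm_ge_zero order_trans by blast
  have IH: "norm ((\<Prod>j\<in>F. a j) - (\<Prod>j\<in>F. b j)) \<le> (\<Sum>j\<in>F. norm (a j - b j) * (\<Prod>i\<in>F-{j}. M i))"
    using insert by auto
  have "norm (\<Prod>j\<in>F. b j) \<le> (\<Prod>j\<in>F. norm (b j))" by (rule norm_prod_le)
  also have "\<dots> \<le> (\<Prod>i\<in>F. M i)" using insert.prems(2) by (intro prod_mono) auto
  finally have norm_b: "norm (\<Prod>j\<in>F. b j) \<le> (\<Prod>i\<in>F. M i)" .
  have "(\<Prod>j\<in>insert x F. a j) - (\<Prod>j\<in>insert x F. b j)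
      = a x * ((\<Prod>j\<in>F. a j) - (\<Prod>j\<in>F. b j)) + (a x - b x) * (\<Prod>j\<in>F. b j)"
    using insert.hyps by (simp add: algebra_simps)
  hence "norm ((\<Prod>j\<in>insert x F. a j) - (\<Prod>j\<in>insert x F. b j))
      \<le> norm (a x * ((\<Prod>j\<in>F. a j) - (\<Prod>j\<in>F. b j))) + norm ((a x - b x) * (\<Prod>j\<in>F. b j))"
    by (simp add: norm_triangle_ineq)
  also have "\<dots> \<le> norm (a x) * norm ((\<Prod>j\<in>F. a j) - (\<Prod>j\<in>F. b j)) + norm (a x - b x) * norm (\<Prod>j\<in>F. b j)"
    by (intro add_mono norm_mult_ineq)
  also have "\<dots> \<le> M x * (\<Sum>j\<in>F. norm (a j - b j) * (\<Prod>i\<in>F-{j}. M i)) + norm (a x - b x) * (\<Prod>i\<in>F. M i)"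
    using insert.prems M_nonneg by (intro add_mono mult_mono IH norm_b) auto
  also have "\<dots> = (\<Sum>j\<in>insert x F. norm (a j - b j) * (\<Prod>i\<in>insert x F-{j}. M i))"
  proof -
    have "(\<Prod>i\<in>insert x F-{j}. M i) = M x * (\<Prod>i\<in>F-{j}. M i)" if "j \<in> F" for j
    proof -
      have "insert x F - {j} = insert x (F - {j})" using that insert.hyps by auto
      thus ?thesis using insert.hyps by simp
    qed
    moreover have "insert x F - {x} = F" using insert.hyps by auto
    ultimately show ?thesis
      using insert.hyps by (simp add: sum_distrib_left algebra_simps)
  qed
  finally show ?case .
qed

lemma abs_divide_minus_one_le:
  fixes q P X L :: real
  assumes "\<bar>q - P\<bar> \<le> X" "L \<le> P" "0 < L"
  shows "\<bar>q / P - 1\<bar> \<le> X / L"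
proof -
  have P: "0 < P" using assms by linarith
  have "q / P - 1 = (q - P) / P" using P by (simp add: diff_divide_distrib)
  hence "\<bar>q / P - 1\<bar> = \<bar>q - P\<bar> / P" using P by (simp add: abs_divide)
  also have "\<dots> \<le> X / P" using assms(1) P by (intro divide_right_mono) auto
  also have "\<dots> \<le> X / L" using assms abs_ge_zero[of "q - P"] by (intro divide_left_mono) auto
  finally show ?thesis .
qed

lemma mult_sqrt_ge_of_half_le:
  fixes x y :: real
  assumes "0 \<le> x" "x / 2 \<le> y"
  shows "x * sqrt x / 3 \<le> y * sqrt y"
proof -
  have "sqrt 2 \<le> 3/2" by (rule real_le_lsqrt) (auto simp: power2_eq_square)
  hence "sqrt (x / 2) * sqrt 2 \<le> sqrt (x / 2) * (3/2)" using assms by (intro mult_left_mono) auto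
  hence "sqrt x \<le> sqrt (x / 2) * (3/2)" by (simp flip: real_sqrt_mult)
  also have "\<dots> \<le> sqrt y * (3/2)" using assms(2) by simp
  finally have "x / 2 * (sqrt x * (2/3)) \<le> y * sqrt y"
    using assms by (intro mult_mono) auto
  thus ?thesis by simp
qed

lemma ratio_of_relative_approximations:
  fixes q1 q2 P1 P2 X :: real
  assumes "\<bar>q1 / P1 - 1\<bar> \<le> X" "\<bar>q2 / P2 - 1\<bar> \<le> X" "X \<le> 1/2" "0 < P1" "0 < P2"
  shows "\<exists>\<epsilon>. \<bar>\<epsilon>\<bar> \<le> 4 * X \<and> q1 / q2 = P1 / P2 * (1 + \<epsilon>)"
proof -
  define e1 where "e1 = q1 / P1 - 1"
  define e2 where "e2 = q2 / P2 - 1"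
  have pos: "1/2 \<le> 1 + e2" using assms unfolding e2_def by linarith
  have "\<bar>(1 + e1) / (1 + e2) - 1\<bar> = \<bar>e1 - e2\<bar> / (1 + e2)" using pos by (simp add: field_simps abs_divide)
  also have "\<dots> \<le> \<bar>e1 - e2\<bar> / (1/2)" using pos by (intro divide_left_mono) auto
  also have "\<dots> \<le> (X + X) / (1/2)"
    using assms abs_triangle_ineq4[of e1 e2] unfolding e1_def e2_def by (intro divide_right_mono) auto
  finally have "\<bar>(1 + e1) / (1 + e2) - 1\<bar> \<le> 4 * X" by simp
  moreover have "q1 / q2 = P1 / P2 * (1 + ((1 + e1) / (1 + e2) - 1))"
    using assms(4,5) pos by (simp add: e1_def e2_def)
  ultimately show ?thesis by blast
qed

lemma powr_three_halves:
  fixes x :: real assumes "0 \<le> x"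
  shows "x powr (3/2) = x * sqrt x"
proof (cases "x = 0")
  case False
  have "x powr (3/2) = x powr (1 + 1/2)" by simp
  also have "\<dots> = x powr 1 * x powr (1/2)" by (rule powr_add)
  also have "\<dots> = x * sqrt x" using assms False by (simp add: powr_half_sqrt)
  finally show ?thesis .
qed simp

lemma powr_three_halves_le:
  fixes x R c :: real
  assumes "0 \<le> x" "0 < R" "0 < c" "c \<le> 1" "x \<le> c * R powr (2/3)"
  shows "x powr (3/2) \<le> c * R"
proof -
  have "x powr (3/2) \<le> (c * R powr (2/3)) powr (3/2)" using assms by (intro powr_mono2) auto
  also have "\<dots> = c powr (3/2) * R" using assms by (simp add: powr_mult powr_powr)
  also have "c powr (3/2) \<le> c" using assms by (simp add: powr_three_halves mult_left_le)
  finally show ?thesis using assms by (simp add: mult_right_mono)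
qed

section \<open>Fourier inversion for Poisson-binomial and Poisson probabilities\<close>

definition poisson_binomial_pmf :: "nat set \<Rightarrow> (nat \<Rightarrow> real) \<Rightarrow> nat \<Rightarrow> real" where
  "poisson_binomial_pmf I p k = (\<Sum>T\<in>{T. T \<subseteq> I \<and> card T = k}. (\<Prod>j\<in>T. p j) * (\<Prod>j\<in>I-T. 1 - p j))"

definition poisson_binomial_char :: "nat set \<Rightarrow> (nat \<Rightarrow> real) \<Rightarrow> real \<Rightarrow> complex" where
  "poisson_binomial_char I p t =
     (\<Prod>j\<in>I. complex_of_real (1 - p j) + complex_of_real (p j) * exp (\<i> * complex_of_real t))"

definition poisson_prob :: "real \<Rightarrow> nat \<Rightarrow> real" where
  "poisson_prob lam k = exp (- lam) * lam ^ k / fact k"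

definition poisson_char :: "real \<Rightarrow> real \<Rightarrow> complex" where
  "poisson_char lam t = exp (complex_of_real lam * (exp (\<i> * complex_of_real t) - 1))"

lemma has_integral_exp_i_int:
  fixes m :: int
  shows "((\<lambda>t::real. exp (\<i> * of_int m * of_real t)) has_integral (if m = 0 then of_real (2*pi) else 0)) {-pi..pi}"
proof (cases "m = 0")
  case True
  have "((\<lambda>t::real. (1::complex)) has_integral ((pi - (-pi)) *\<^sub>R 1)) {-pi..pi}"
    using has_integral_const_real[of "1::complex" "-pi" pi] pi_gt_zero by simp
  thus ?thesis using True by (simp add: scaleR_conv_of_real)
next
  case False
  let ?G = "\<lambda>z::complex. exp (\<i> * of_int m * z) / (\<i> * of_int m)"
  have G: "(?G has_field_derivative exp (\<i> * of_int m * z)) (at z)" for z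
    using False by (auto intro!: derivative_eq_intros)
  have "((\<lambda>t::real. exp (\<i> * of_int m * of_real t)) has_integral (?G (of_real pi) - ?G (of_real (-pi)))) {-pi..pi}"
    by (rule fundamental_theorem_of_calculus) (use pi_gt_zero has_vector_derivative_real_field[OF G] in auto)
  moreover have "?G (of_real pi) = ?G (of_real (-pi))"
  proof -
    have "exp (\<i> * of_int m * of_real pi) = exp (\<i> * of_int m * of_real (-pi) + (2 * of_int m * pi) * \<i>)"
      by (simp add: algebra_simps)
    also have "\<dots> = exp (\<i> * of_int m * of_real (-pi)) * exp ((2 * of_int m * pi) * \<i>)"
      by (rule exp_add)
    also have "exp ((2 * of_int m * pi) * \<i>) = 1" by (rule exp_integer_2pi) simp
    finally show ?thesis by simp
  qed
  ultimately show ?thesis using False by simp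
qed

lemma has_integral_trig_poly:
  fixes c :: "nat \<Rightarrow> complex"
  assumes "finite A" "k \<in> A"
  shows "((\<lambda>t. (\<Sum>r\<in>A. c r * exp (\<i> * of_nat r * of_real t)) * exp (- \<i> * of_nat k * of_real t))
           has_integral 2 * pi * c k) {-pi..pi}"
proof -
  have shift: "(\<Sum>r\<in>A. c r * exp (\<i> * of_nat r * of_real t)) * exp (- \<i> * of_nat k * of_real t)
      = (\<Sum>r\<in>A. c r * exp (\<i> * of_int (int r - int k) * of_real t))" for t
  proof -
    have "exp (\<i> * of_nat r * of_real t) * exp (- \<i> * of_nat k * of_real t)
        = exp (\<i> * of_int (int r - int k) * of_real t)" for r
      by (simp add: algebra_simps flip: exp_add)
    thus ?thesis by (simp add: sum_distrib_right mult.assoc)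
  qed
  have "((\<lambda>t. \<Sum>r\<in>A. c r * exp (\<i> * of_int (int r - int k) * of_real t)) has_integral
        (\<Sum>r\<in>A. c r * (if int r - int k = 0 then of_real (2*pi) else 0))) {-pi..pi}"
    using assms by (intro has_integral_sum has_integral_mult_right has_integral_exp_i_int) auto
  also have "(\<Sum>r\<in>A. c r * (if int r - int k = 0 then of_real (2*pi) else 0)) = 2 * pi * c k"
    using assms by (simp add: sum.delta[of A k] if_distrib cong: if_cong)
  finally show ?thesis unfolding shift .
qed

lemma poisson_binomial_char_eq_sum:
  assumes "finite I" "card I \<le> N"
  shows "poisson_binomial_char I p t =
    (\<Sum>r\<le>N. complex_of_real (poisson_binomial_pmf I p r) * exp (\<i> * of_nat r * of_real t))"
proof -
  define c where "c T = (\<Prod>j\<in>T. p j) * (\<Prod>j\<in>I-T. 1 - p j)" for T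
  have "poisson_binomial_char I p t =
      (\<Prod>j\<in>I. complex_of_real (p j) * exp (\<i> * complex_of_real t) + complex_of_real (1 - p j))"
    unfolding poisson_binomial_char_def by (simp add: add.commute)
  also have "\<dots> = (\<Sum>T\<in>Pow I. (\<Prod>j\<in>T. complex_of_real (p j) * exp (\<i> * complex_of_real t))
                                 * (\<Prod>j\<in>I-T. complex_of_real (1 - p j)))"
    by (rule prod_add[OF assms(1)])
  also have "\<dots> = (\<Sum>T\<in>Pow I. complex_of_real (c T) * exp (\<i> * of_nat (card T) * of_real t))"
    by (intro sum.cong) (simp_all add: c_def prod.distrib algebra_simps flip: exp_of_nat_mult)
  also have "\<dots> = (\<Sum>r\<le>N. \<Sum>T\<in>{T. T \<in> Pow I \<and> card T = r}.
                        complex_of_real (c T) * exp (\<i> * of_nat (card T) * of_real t))"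
  proof (rule sum.group[symmetric])
    show "card ` Pow I \<subseteq> {..N}" using assms by (auto intro: card_mono order_trans)
  qed (use assms in auto)
  also have "\<dots> = (\<Sum>r\<le>N. complex_of_real (poisson_binomial_pmf I p r) * exp (\<i> * of_nat r * of_real t))"
  proof (rule sum.cong[OF refl])
    fix r
    have "(\<Sum>T\<in>{T. T \<in> Pow I \<and> card T = r}. complex_of_real (c T) * exp (\<i> * of_nat (card T) * of_real t))
        = (\<Sum>T\<in>{T. T \<subseteq> I \<and> card T = r}. complex_of_real (c T) * exp (\<i> * of_nat r * of_real t))"
      by (intro sum.cong) auto
    thus "(\<Sum>T\<in>{T. T \<in> Pow I \<and> card T = r}. complex_of_real (c T) * exp (\<i> * of_nat (card T) * of_real t))
        = complex_of_real (poisson_binomial_pmf I p r) * exp (\<i> * of_nat r * of_real t)"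
      by (simp add: poisson_binomial_pmf_def c_def sum_distrib_right)
  qed
  finally show ?thesis .
qed

lemma has_integral_poisson_binomial_char:
  assumes "finite I"
  shows "((\<lambda>t. poisson_binomial_char I p t * exp (- \<i> * of_nat k * of_real t))
           has_integral complex_of_real (2 * pi * poisson_binomial_pmf I p k)) {-pi..pi}"
proof -
  have "((\<lambda>t. (\<Sum>r\<le>max k (card I). complex_of_real (poisson_binomial_pmf I p r) * exp (\<i> * of_nat r * of_real t))
          * exp (- \<i> * of_nat k * of_real t)) has_integral 2 * pi * complex_of_real (poisson_binomial_pmf I p k))
        {-pi..pi}"
    by (rule has_integral_trig_poly) auto
  thus ?thesis
    unfolding poisson_binomial_char_eq_sum[OF assms max.cobounded2[of "card I" k]] by simp
qed

lemma has_integral_exp_char: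
  fixes lam :: real assumes lam: "0 \<le> lam"
  shows "((\<lambda>t. exp (complex_of_real lam * exp (\<i> * of_real t)) * exp (- \<i> * of_nat k * of_real t))
           has_integral complex_of_real (2 * pi * (lam^k / fact k))) {-pi..pi}"
proof -
  let ?z = "\<lambda>t. complex_of_real lam * exp (\<i> * of_real t)"
  let ?f = "\<lambda>t. exp (?z t) * exp (- \<i> * of_nat k * of_real t)"
  let ?P = "\<lambda>N t. (\<Sum>r<N. ?z t ^ r /\<^sub>R fact r) * exp (- \<i> * of_nat k * of_real t)"
  let ?c = "complex_of_real (2 * pi * (lam^k / fact k))"
  let ?tail = "\<lambda>N. exp lam - (\<Sum>r<N. lam ^ r / fact r)"
  have f_int: "?f integrable_on {-pi..pi}"
    by (intro integrable_continuous_interval continuous_intros)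
  \<comment> \<open>Truncating the exponential series costs at most the tail of the series of \<open>exp lam\<close>,
    uniformly in \<open>t\<close>.\<close>
  have bound: "norm (integral {-pi..pi} ?f - ?c) \<le> 2 * pi * ?tail N" if "k < N" for N
  proof -
    have "?z t ^ r /\<^sub>R fact r = complex_of_real (lam^r / fact r) * exp (\<i> * of_real t) ^ r" for t r
      by (simp add: scaleR_conv_of_real power_mult_distrib divide_inverse mult_ac)
    also have "exp (\<i> * of_real t) ^ r = exp (\<i> * of_nat r * of_real t)" for t r
      by (simp add: mult_ac flip: exp_of_nat_mult)
    finally have "?z t ^ r /\<^sub>R fact r = complex_of_real (lam^r / fact r) * exp (\<i> * of_nat r * of_real t)" for t r .
    hence P_int: "(?P N has_integral ?c) {-pi..pi}"
      using has_integral_trig_poly[of "{..<N}" k "\<lambda>r. complex_of_real (lam^r / fact r)"] that by simp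
    have "norm (integral {-pi..pi} (\<lambda>t. ?f t - ?P N t)) \<le> ?tail N * (pi - -pi)"
    proof (rule integral_bound)
      fix t :: real
      have "norm (?f t - ?P N t) = norm (exp (?z t) - (\<Sum>r<N. ?z t ^ r /\<^sub>R fact r))"
        by (simp add: norm_mult flip: left_diff_distrib)
      also have "\<dots> \<le> ?tail N"
        using norm_exp_minus_partial_sum_le[of "?z t" N] lam by (simp add: norm_mult)
      finally show "norm (?f t - ?P N t) \<le> ?tail N" .
    next
      show "continuous_on {-pi..pi} (\<lambda>t. ?f t - ?P N t)" by (intro continuous_intros)
    qed (use pi_gt_zero in simp)
    moreover have "integral {-pi..pi} (\<lambda>t. ?f t - ?P N t) = integral {-pi..pi} ?f - ?c"
      using integral_diff[OF f_int has_integral_integrable[OF P_int]] integral_unique[OF P_int] by simp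
    ultimately show ?thesis by (simp add: mult.commute)
  qed
  have "(\<lambda>N. \<Sum>r<N. lam ^ r / fact r) \<longlonglongrightarrow> exp lam"
    using exp_converges[of lam] by (simp add: sums_def divide_inverse mult.commute)
  hence "(\<lambda>N. 2 * pi * ?tail N) \<longlonglongrightarrow> 2 * pi * (exp lam - exp lam)"
    by (intro tendsto_intros)
  hence "norm (integral {-pi..pi} ?f - ?c) \<le> 0"
    using bound by (intro LIMSEQ_le_const[of "\<lambda>N. 2 * pi * ?tail N"] exI[of _ "Suc k"]) auto
  hence "integral {-pi..pi} ?f = ?c" by simp
  thus ?thesis using f_int by (metis has_integral_integral)
qed

lemma has_integral_poisson_char:
  fixes lam :: real assumes "0 \<le> lam"
  shows "((\<lambda>t. poisson_char lam t * exp (- \<i> * of_nat k * of_real t))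
           has_integral complex_of_real (2 * pi * poisson_prob lam k)) {-pi..pi}"
proof -
  have "poisson_char lam t = exp (complex_of_real lam * exp (\<i> * of_real t) + complex_of_real (- lam))" for t
    by (simp add: poisson_char_def algebra_simps)
  hence "poisson_char lam t = exp (complex_of_real lam * exp (\<i> * of_real t)) * complex_of_real (exp (- lam))" for t
    by (simp only: exp_add exp_of_real)
  thus ?thesis
    using has_integral_mult_left[OF has_integral_exp_char[OF assms, of k], of "complex_of_real (exp (- lam))"]
    by (simp add: poisson_prob_def algebra_simps)
qed

section \<open>Poisson probabilities near the mode\<close>

lemma poisson_prob_divide:
  assumes "0 < mu"
  shows "poisson_prob lam k / poisson_prob mu k = exp (mu - lam) * (lam / mu) ^ k"
  using assms by (simp add: poisson_prob_def exp_diff exp_minus power_divide field_simps)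

lemma two_mult_divide_le_ln_one_plus:
  fixes x :: real assumes "0 \<le> x"
  shows "2 * x / (2 + x) \<le> ln (1 + x)"
proof -
  have "(\<lambda>y. ln (1 + y) - 2 * y / (2 + y)) 0 \<le> (\<lambda>y. ln (1 + y) - 2 * y / (2 + y)) x"
  proof (rule DERIV_nonneg_imp_ge_at_0[where f'="\<lambda>y. inverse (1 + y) - (2 * (2 + y) - 1 * (2 * y)) / (2 + y)^2"])
    fix y :: real assume y: "0 \<le> y"
    show "((\<lambda>y. ln (1 + y) - 2 * y / (2 + y)) has_real_derivative
            inverse (1 + y) - (2 * (2 + y) - 1 * (2 * y)) / (2 + y)^2) (at y)"
      using y by (auto intro!: derivative_eq_intros simp: power2_eq_square field_simps)
    have "4 * (1 + y) \<le> (2 + y)^2" by (simp add: power2_eq_square algebra_simps)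
    hence "4 / (2 + y)^2 \<le> 4 / (4 * (1 + y))" using y by (intro divide_left_mono) auto
    also have "\<dots> = inverse (1 + y)" using y by (simp add: field_simps)
    finally show "0 \<le> inverse (1 + y) - (2 * (2 + y) - 1 * (2 * y)) / (2 + y)^2" by simp
  qed (use assms in auto)
  thus ?thesis by simp
qed

lemma fact_le_Stirling_upper:
  assumes "1 \<le> k"
  shows "fact k \<le> exp 1 * sqrt (real k) * real k ^ k * exp (- real k)"
  using assms
proof (induction k rule: dec_induct)
  case base
  then show ?case by (simp add: exp_minus)
next
  case (step m)
  have m: "1 \<le> real m" using step.hyps by simp
  have pos: "0 < 1 + 1 / real m" using m by (simp add: add_pos_nonneg)
  \<comment> \<open>The inductive step amounts to \<open>e \<le> (1 + 1/m)\<^sup>m\<^sup>+\<^sup>1\<^sup>/\<^sup>2\<close>.\<close>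
  have "1 / (real m + 1/2) = 2 * (1 / real m) / (2 + 1 / real m)" using m by (simp add: field_simps)
  also have "\<dots> \<le> ln (1 + 1 / real m)" by (rule two_mult_divide_le_ln_one_plus) simp
  finally have "exp 1 \<le> exp ((real m + 1/2) * ln (1 + 1 / real m))" using m by (simp add: field_simps)
  also have "\<dots> = exp (real m * ln (1 + 1 / real m)) * exp ((1/2) * ln (1 + 1 / real m))"
    by (simp add: algebra_simps flip: exp_add)
  also have "exp ((1/2) * ln (1 + 1 / real m)) = (1 + 1 / real m) powr (1/2)"
    using pos by (simp add: powr_def)
  also have "exp (real m * ln (1 + 1 / real m)) = (1 + 1 / real m) ^ m"
    using pos by (simp add: exp_of_nat_mult)
  also have "(1 + 1 / real m) powr (1/2) = sqrt (1 + 1 / real m)"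
    using pos by (simp add: powr_half_sqrt)
  finally have "exp 1 * (sqrt (real m) * real m ^ m)
      \<le> ((1 + 1 / real m) ^ m * sqrt (1 + 1 / real m)) * (sqrt (real m) * real m ^ m)"
    by (rule mult_right_mono) simp
  also have "\<dots> = sqrt (real m + 1) * (real m + 1) ^ m"
    using m by (simp add: field_simps power_mult_distrib flip: real_sqrt_mult)
  finally have key: "exp 1 * sqrt (real m) * real m ^ m \<le> sqrt (real m + 1) * (real m + 1) ^ m"
    by (simp add: mult.assoc)
  have "fact (Suc m) = (real m + 1) * fact m" by simp
  also have "\<dots> \<le> (real m + 1) * (exp 1 * sqrt (real m) * real m ^ m * exp (- real m))"
    using step.IH by (intro mult_left_mono) auto
  also have "\<dots> \<le> (real m + 1) * exp (- real m) * (sqrt (real m + 1) * (real m + 1) ^ m)"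
    using key by (simp add: mult_left_mono mult_ac)
  also have "\<dots> = exp 1 * sqrt (real (Suc m)) * real (Suc m) ^ Suc m * exp (- real (Suc m))"
    by (simp add: exp_diff exp_minus field_simps)
  finally show ?case .
qed

lemma poisson_prob_near_mode_ge:
  fixes lam :: real
  assumes k: "1 \<le> k" and lam: "0 \<le> real k - lam" "real k - lam \<le> sqrt (real k) / 8"
  shows "exp (-2) / sqrt (real k) \<le> poisson_prob lam k"
proof -
  define t where "t = real k - lam"
  have kr: "1 \<le> real k" using k by simp
  have sqrt_k: "0 < sqrt (real k)" "sqrt (real k) \<le> real k" using kr sqrt_le_self by auto
  \<comment> \<open>Write \<open>lam = k(1 + x)\<close>; then \<open>(1 + x)\<^sup>k \<ge> e\<^sup>k\<^sup>x\<^sup>-\<^sup>2\<^sup>k\<^sup>x\<^sup>2\<close>, and Stirling's bound handles \<open>k!\<close>.\<close>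
  define x where "x = - t / real k"
  have "t \<le> real k / 8" using lam sqrt_k unfolding t_def by linarith
  hence x_small: "\<bar>x\<bar> \<le> 1/2" using lam kr unfolding x_def t_def by (simp add: field_simps)
  have lam_eq: "lam = real k * (1 + x)" using kr by (simp add: x_def t_def field_simps)
  have "exp (real k * (x - 2 * x^2)) \<le> exp (real k * ln (1 + x))"
    using abs_ln_one_plus_x_minus_x_bound[OF x_small] kr by (simp add: mult_left_mono)
  also have "\<dots> = (1 + x)^k" using x_small by (simp add: exp_of_nat_mult)
  also have "real k * (x - 2 * x^2) = - t - 2 * (t^2 / real k)"
    using kr by (simp add: x_def power2_eq_square field_simps)
  finally have pow_ge: "exp (- t - 2 * (t^2 / real k)) \<le> (1 + x)^k" .
  have "t^2 \<le> (sqrt (real k) / 8)^2" using lam unfolding t_def by (intro power_mono) auto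
  hence "t^2 / real k \<le> 1/64" using kr by (simp add: power_divide field_simps)
  hence "exp (-2) / sqrt (real k) \<le> exp (- 1 - 2 * (t^2 / real k)) / sqrt (real k)"
    using sqrt_k by (intro divide_right_mono) auto
  also have "\<dots> = exp (- lam) * (real k ^ k * exp (- t - 2 * (t^2 / real k)))
                   / (exp 1 * sqrt (real k) * real k ^ k * exp (- real k))"
    using kr by (simp add: t_def field_simps flip: exp_add exp_diff)
  also have "\<dots> \<le> exp (- lam) * (real k ^ k * (1 + x)^k) / (exp 1 * sqrt (real k) * real k ^ k * exp (- real k))"
    using pow_ge kr sqrt_k by (intro divide_right_mono mult_left_mono) auto
  also have "\<dots> \<le> exp (- lam) * (real k ^ k * (1 + x)^k) / fact k"
    using fact_le_Stirling_upper[OF k] x_small kr by (intro divide_left_mono mult_nonneg_nonneg) auto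
  also have "\<dots> = poisson_prob lam k"
    unfolding poisson_prob_def lam_eq by (simp add: power_mult_distrib)
  finally show ?thesis .
qed

section \<open>Local Poisson approximation\<close>

lemma norm_exp_i_minus_1_sq: "norm (exp (\<i> * complex_of_real t) - 1)^2 = 2 * (1 - cos t)"
proof -
  have "norm (exp (\<i> * complex_of_real t) - 1)^2 = (cos t - 1)^2 + (sin t)^2"
    by (simp add: cmod_power2 Re_exp Im_exp)
  also have "\<dots> = 2 * (1 - cos t)"
    using sin_cos_squared_add[of t] by (simp add: power2_eq_square algebra_simps)
  finally show ?thesis .
qed

lemma norm_bernoulli_char_le:
  fixes p t :: real assumes "0 \<le> p" "p \<le> 1"
  shows "norm (complex_of_real (1 - p) + complex_of_real p * exp (\<i> * complex_of_real t))
           \<le> exp (- (p * (1 - p)) * (1 - cos t))"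
proof -
  let ?a = "complex_of_real (1 - p) + complex_of_real p * exp (\<i> * complex_of_real t)"
  have "norm ?a ^2 = (1 - p + p * cos t)^2 + (p * sin t)^2" by (simp add: cmod_power2 Re_exp Im_exp)
  also have "\<dots> = 1 - 2 * (p * (1 - p)) * (1 - cos t) + p^2 * ((sin t)^2 + (cos t)^2 - 1)"
    by algebra
  also have "\<dots> \<le> exp (- 2 * (p * (1 - p)) * (1 - cos t))"
    using exp_ge_add_one_self[of "- 2 * (p * (1 - p)) * (1 - cos t)"] by simp
  also have "\<dots> = exp (- (p * (1 - p)) * (1 - cos t)) ^ 2"
    by (simp add: power2_eq_square flip: exp_add)
  finally show ?thesis by (rule power2_le_imp_le) simp
qed

lemma norm_poisson_char_le:
  fixes p t :: real assumes "0 \<le> p" "p \<le> 1"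
  shows "norm (poisson_char p t) \<le> exp (- (p * (1 - p)) * (1 - cos t))"
proof -
  have "p * (1 - p) * (1 - cos t) \<le> p * (1 - cos t)"
    using assms by (intro mult_right_mono) (auto simp: mult_left_le)
  thus ?thesis by (simp add: poisson_char_def norm_exp_eq_Re Re_exp Im_exp algebra_simps)
qed

lemma norm_bernoulli_char_minus_poisson_char_le:
  fixes p t :: real assumes "0 \<le> p" "p \<le> 1"
  shows "norm (complex_of_real (1 - p) + complex_of_real p * exp (\<i> * complex_of_real t) - poisson_char p t)
           \<le> 18 * p^2 * (1 - cos t)"
proof -
  define w where "w = exp (\<i> * complex_of_real t) - 1"
  define u where "u = complex_of_real p * w"
  have "norm w \<le> 2"
    unfolding w_def using norm_triangle_ineq4[of "exp (\<i> * complex_of_real t)" 1] by simp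
  hence norm_u: "norm u \<le> 2"
    unfolding u_def using assms mult_mono[of p 1 "norm w" 2] by (simp add: norm_mult)
  have "norm (complex_of_real (1 - p) + complex_of_real p * exp (\<i> * complex_of_real t) - poisson_char p t)
      = norm (exp u - (\<Sum>r<2. u^r /\<^sub>R fact r))"
    by (simp add: poisson_char_def u_def w_def algebra_simps eval_nat_numeral norm_minus_commute)
  also have "\<dots> \<le> exp (norm u) - 1 - norm u"
    using norm_exp_minus_partial_sum_le[of u 2] by (simp add: eval_nat_numeral)
  also have "\<dots> \<le> norm u ^2 * exp (norm u)" by (rule exp_minus_one_minus_le) simp
  also have "\<dots> \<le> norm u ^2 * 9"
    using norm_u exp_2_le_9 by (intro mult_left_mono) (auto intro: order_trans)
  also have "norm u ^2 = p^2 * (2 * (1 - cos t))"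
    using assms by (simp add: u_def w_def norm_mult power_mult_distrib norm_exp_i_minus_1_sq)
  finally show ?thesis by (simp add: algebra_simps)
qed

lemma poisson_char_sum:
  assumes "finite I"
  shows "poisson_char (\<Sum>j\<in>I. p j) t = (\<Prod>j\<in>I. poisson_char (p j) t)"
  unfolding poisson_char_def using assms by (simp add: sum_distrib_right exp_sum flip: exp_sum)

lemma norm_poisson_binomial_char_minus_poisson_char_le:
  fixes p :: "nat \<Rightarrow> real"
  assumes I: "finite I" and p: "\<And>j. j \<in> I \<Longrightarrow> 0 \<le> p j \<and> p j \<le> 1"
  defines "mu \<equiv> (\<Sum>j\<in>I. p j * (1 - p j))"
  shows "norm (poisson_binomial_char I p t - poisson_char (\<Sum>j\<in>I. p j) t)
           \<le> 36 * (\<Sum>j\<in>I. (p j)^2) * ((1 - cos t) * exp (- mu * (1 - cos t)))"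
proof -
  define x where "x = 1 - cos t"
  have x: "0 \<le> x" "x \<le> 2" unfolding x_def using cos_ge_minus_one[of t] by auto
  define a where "a j = complex_of_real (1 - p j) + complex_of_real (p j) * exp (\<i> * complex_of_real t)" for j
  define M where "M j = exp (- (p j * (1 - p j)) * x)" for j
  have "norm (poisson_binomial_char I p t - poisson_char (\<Sum>j\<in>I. p j) t)
      = norm ((\<Prod>j\<in>I. a j) - (\<Prod>j\<in>I. poisson_char (p j) t))"
    by (simp add: poisson_char_sum[OF I] poisson_binomial_char_def a_def)
  also have "\<dots> \<le> (\<Sum>j\<in>I. norm (a j - poisson_char (p j) t) * (\<Prod>i\<in>I-{j}. M i))"
    using I p norm_bernoulli_char_le norm_poisson_char_le
    unfolding a_def M_def x_def by (intro norm_prod_diff_le_weighted) auto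
  also have "\<dots> \<le> (\<Sum>j\<in>I. (18 * (p j)^2 * x) * (2 * exp (- mu * x)))"
  proof (rule sum_mono)
    fix j assume j: "j \<in> I"
    \<comment> \<open>Omitting one factor from \<open>\<Prod>M\<close> costs at most \<open>e\<^sup>1\<^sup>/\<^sup>2 \<le> 2\<close>, since \<open>p(1-p) \<le> 1/4\<close>.\<close>
    have "(\<Prod>i\<in>I-{j}. M i) = exp (- (\<Sum>i\<in>I-{j}. p i * (1 - p i)) * x)"
      unfolding M_def using I by (simp add: exp_sum[symmetric] sum_distrib_right sum_negf)
    also have "\<dots> = exp (- mu * x) * exp (p j * (1 - p j) * x)"
      unfolding mu_def using I j by (simp add: sum_diff1 algebra_simps flip: exp_add)
    also have "\<dots> \<le> exp (- mu * x) * 2"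
    proof -
      have "p j * (1 - p j) \<le> 1/4" using sum_squares_ge_zero[of "p j - 1/2" 0]
        by (simp add: power2_eq_square algebra_simps)
      hence "p j * (1 - p j) * x \<le> 1/4 * 2" using x p[OF j] by (intro mult_mono) auto
      hence "exp (p j * (1 - p j) * x) \<le> exp (1/2)" by simp
      also have "\<dots> \<le> 2" by (rule exp_half_le2)
      finally show ?thesis by (intro mult_left_mono) auto
    qed
    finally have "(\<Prod>i\<in>I-{j}. M i) \<le> 2 * exp (- mu * x)" by simp
    moreover have "norm (a j - poisson_char (p j) t) \<le> 18 * (p j)^2 * x"
      using norm_bernoulli_char_minus_poisson_char_le[of "p j" t] p[OF j] unfolding a_def x_def by auto
    ultimately show "norm (a j - poisson_char (p j) t) * (\<Prod>i\<in>I-{j}. M i) \<le> (18 * (p j)^2 * x) * (2 * exp (- mu * x))"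
      by (intro mult_mono) (use x in \<open>auto simp: M_def intro: prod_nonneg\<close>)
  qed
  also have "\<dots> = 36 * (\<Sum>j\<in>I. (p j)^2) * (x * exp (- mu * x))"
    by (simp add: sum_distrib_left sum_distrib_right algebra_simps)
  finally show ?thesis unfolding x_def .
qed

lemma one_minus_cos_mult_exp_le:
  fixes mu t :: real assumes "0 < mu" "\<bar>t\<bar> \<le> pi"
  shows "(1 - cos t) * exp (- mu * (1 - cos t)) \<le> (1/2) * (t^2 / (1 + (mu/24) * t^2)^2)"
proof -
  note cos_bounds = one_minus_cos_bounds[OF assms(2)]
  have pos: "0 < 1 + (mu/24) * t^2" using assms by (simp add: add_pos_nonneg)
  have "exp (- mu * (1 - cos t)) \<le> 1 / (1 + mu * (1 - cos t)/2)^2"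
    using exp_neg_le_inverse_square[of "mu * (1 - cos t)"] assms by simp
  also have "\<dots> \<le> 1 / (1 + (mu/24) * t^2)^2"
  proof -
    have "(mu/2) * (t^2/12) \<le> (mu/2) * (1 - cos t)" using cos_bounds(1) assms by (intro mult_left_mono) auto
    hence "(1 + (mu/24) * t^2)^2 \<le> (1 + mu * (1 - cos t)/2)^2" using pos by (intro power_mono) auto
    thus ?thesis using pos by (intro divide_left_mono mult_pos_pos) auto
  qed
  finally have "exp (- mu * (1 - cos t)) \<le> 1 / (1 + (mu/24) * t^2)^2" .
  hence "(1 - cos t) * exp (- mu * (1 - cos t)) \<le> (t^2/2) * (1 / (1 + (mu/24) * t^2)^2)"
    using cos_bounds(2) by (intro mult_mono) auto
  thus ?thesis by simp
qed

lemma has_integral_sq_div_one_plus_sq_sq: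
  fixes b :: real assumes b: "0 < b"
  shows "((\<lambda>t. t^2 / (1 + b*t^2)^2) has_integral
           ((arctan (sqrt b * pi) / sqrt b - pi / (1 + b * pi^2)) / b)) {-pi..pi}"
proof -
  let ?F = "\<lambda>t. (arctan (sqrt b * t) / sqrt b - t / (1 + b * t^2)) / (2*b)"
  have pos: "0 < 1 + b * t^2" for t using b by (simp add: add_pos_nonneg)
  have sq: "(sqrt b * t)^2 = b * t^2" for t using b by (simp add: power_mult_distrib)
  have "(?F has_real_derivative t^2 / (1 + b*t^2)^2) (at t)" for t
  proof -
    have "((\<lambda>t. arctan (sqrt b * t)) has_real_derivative inverse (1 + (sqrt b * t)^2) * sqrt b) (at t)"
      by (rule DERIV_chain'[OF DERIV_cmult_Id DERIV_arctan])
    moreover have "((\<lambda>t. t / (1 + b * t^2)) has_real_derivative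
                     (1 * (1 + b*t^2) - (b * (2 * t)) * t) / (1 + b*t^2)^2) (at t)"
      using pos[of t] by (auto intro!: derivative_eq_intros simp: power2_eq_square)
    ultimately have deriv: "(?F has_real_derivative
        (inverse (1 + (sqrt b * t)^2) * sqrt b / sqrt b - (1 * (1 + b*t^2) - (b * (2 * t)) * t) / (1 + b*t^2)^2)
          / (2*b)) (at t)"
      by (intro DERIV_cdivide DERIV_diff) auto
    have eq: "(inverse (1 + (sqrt b * t)^2) * sqrt b / sqrt b
        - (1 * (1 + b*t^2) - (b * (2 * t)) * t) / (1 + b*t^2)^2) / (2*b) = t^2 / (1 + b*t^2)^2"
    proof -
      have "inverse (1 + (sqrt b * t)^2) * sqrt b / sqrt b = inverse (1 + b*t^2)" using b by (simp add: sq)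
      moreover have "(inverse D - (1 * D - (b * (2 * t)) * t) / D^2) / (2*b) = t^2 / D^2" if "0 < D" for D
        using b that by (simp add: field_simps power2_eq_square)
      ultimately show ?thesis using pos[of t] by simp
    qed
    show ?thesis using deriv unfolding eq .
  qed
  hence "((\<lambda>t. t^2 / (1 + b*t^2)^2) has_integral (?F pi - ?F (-pi))) {-pi..pi}"
    using pi_gt_zero
    by (intro fundamental_theorem_of_calculus)
       (auto intro: has_field_derivative_at_within[THEN has_real_derivative_iff_has_vector_derivative[THEN iffD1]])
  moreover have "?F pi - ?F (-pi) = (arctan (sqrt b * pi) / sqrt b - pi / (1 + b * pi^2)) / b"
    using b by (simp add: arctan_minus field_simps)
  ultimately show ?thesis by simp
qed

lemma integral_one_minus_cos_mult_exp_le: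
  fixes mu :: real assumes mu: "0 < mu"
  shows "integral {-pi..pi} (\<lambda>t. (1 - cos t) * exp (- mu * (1 - cos t))) \<le> 30 * pi / (mu * sqrt mu)"
proof -
  \<comment> \<open>The integrand is dominated by a rational function with an explicit primitive; the
    decay \<open>\<mu>\<^sup>-\<^sup>3\<^sup>/\<^sup>2\<close> comes from its integral.\<close>
  define b where "b = mu/24"
  have b: "0 < b" using mu by (simp add: b_def)
  note rational = has_integral_mult_right[OF has_integral_sq_div_one_plus_sq_sq[OF b], of "1/2"]
  have "(\<lambda>t. (1 - cos t) * exp (- mu * (1 - cos t))) integrable_on {-pi..pi}"
    by (intro integrable_continuous_interval continuous_intros)
  hence "integral {-pi..pi} (\<lambda>t. (1 - cos t) * exp (- mu * (1 - cos t)))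
        \<le> integral {-pi..pi} (\<lambda>t. (1/2) * (t^2 / (1 + b * t^2)^2))"
    using rational one_minus_cos_mult_exp_le[OF mu] unfolding b_def
    by (intro integral_le) (auto simp: abs_le_iff)
  also have "\<dots> = (1/2) * ((arctan (sqrt b * pi) / sqrt b - pi / (1 + b * pi^2)) / b)"
    using rational by (rule integral_unique)
  also have "\<dots> \<le> (1/2) * ((pi/2) / sqrt b / b)"
  proof -
    have "arctan (sqrt b * pi) / sqrt b \<le> (pi/2) / sqrt b"
      using arctan_ubound[of "sqrt b * pi"] b by (intro divide_right_mono) auto
    moreover have "0 \<le> pi / (1 + b * pi^2)" using b by (simp add: add_pos_nonneg)
    ultimately have "arctan (sqrt b * pi) / sqrt b - pi / (1 + b * pi^2) \<le> (pi/2) / sqrt b" by linarith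
    thus ?thesis using b by (intro mult_left_mono divide_right_mono) auto
  qed
  also have "\<dots> = 6 * sqrt 24 * pi / (mu * sqrt mu)"
    using mu by (simp add: b_def real_sqrt_divide field_simps)
  also have "\<dots> \<le> 30 * pi / (mu * sqrt mu)"
  proof -
    have "sqrt 24 \<le> 5" by (rule real_le_lsqrt) auto
    thus ?thesis using mu by (intro divide_right_mono) auto
  qed
  finally show ?thesis .
qed

lemma poisson_binomial_pmf_local_approx:
  fixes p :: "nat \<Rightarrow> real"
  assumes I: "finite I" and p: "\<And>j. j \<in> I \<Longrightarrow> 0 \<le> p j \<and> p j \<le> 1"
  defines "lam \<equiv> (\<Sum>j\<in>I. p j)" and "mu \<equiv> (\<Sum>j\<in>I. p j * (1 - p j))"
  assumes mu: "0 < mu"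
  shows "\<bar>poisson_binomial_pmf I p k - poisson_prob lam k\<bar> \<le> 540 * (\<Sum>j\<in>I. (p j)^2) / (mu * sqrt mu)"
proof -
  define s where "s = (\<Sum>j\<in>I. (p j)^2)"
  let ?kernel = "\<lambda>t. exp (- \<i> * of_nat k * of_real t)"
  let ?f = "\<lambda>t. poisson_binomial_char I p t * ?kernel t - poisson_char lam t * ?kernel t"
  let ?g = "\<lambda>t. 36 * s * ((1 - cos t) * exp (- mu * (1 - cos t)))"
  have "0 \<le> lam" unfolding lam_def using p by (simp add: sum_nonneg)
  hence f_int: "(?f has_integral complex_of_real (2 * pi * poisson_binomial_pmf I p k)
                        - complex_of_real (2 * pi * poisson_prob lam k)) {-pi..pi}"
    by (intro has_integral_diff has_integral_poisson_binomial_char[OF I] has_integral_poisson_char)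
  hence "integral {-pi..pi} ?f = complex_of_real (2 * pi * (poisson_binomial_pmf I p k - poisson_prob lam k))"
    by (simp only: integral_unique right_diff_distrib of_real_diff)
  hence "2 * pi * \<bar>poisson_binomial_pmf I p k - poisson_prob lam k\<bar> = norm (integral {-pi..pi} ?f)"
    using pi_gt_zero by (simp only: norm_of_real abs_mult)
  also have "\<dots> \<le> integral {-pi..pi} ?g"
  proof (rule integral_norm_bound_integral)
    show "?f integrable_on {-pi..pi}" using f_int by blast
    show "?g integrable_on {-pi..pi}" by (intro integrable_continuous_interval continuous_intros)
  next
    fix t :: real
    have "norm (?f t) = norm (poisson_binomial_char I p t - poisson_char lam t)"
      by (simp add: norm_mult flip: left_diff_distrib)
    also have "\<dots> \<le> ?g t"
      using norm_poisson_binomial_char_minus_poisson_char_le[OF I p] unfolding lam_def mu_def s_def by simp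
    finally show "norm (?f t) \<le> ?g t" .
  qed
  also have "\<dots> = 36 * s * integral {-pi..pi} (\<lambda>t. (1 - cos t) * exp (- mu * (1 - cos t)))"
    by (rule integral_mult_right)
  also have "\<dots> \<le> 36 * s * (30 * pi / (mu * sqrt mu))"
    using integral_one_minus_cos_mult_exp_le[OF mu] by (intro mult_left_mono) (auto simp: s_def sum_nonneg)
  also have "\<dots> = 2 * pi * (540 * s / (mu * sqrt mu))" by simp
  finally show ?thesis
    unfolding s_def by (rule mult_left_le_imp_le) simp
qed

lemma poisson_binomial_pmf_relative_approx:
  fixes p :: "nat \<Rightarrow> real"
  assumes I: "finite I" and p: "\<And>j. j \<in> I \<Longrightarrow> 0 \<le> p j \<and> p j \<le> 1" and k: "1 \<le> k"
  defines "lam \<equiv> (\<Sum>j\<in>I. p j)" and "s \<equiv> (\<Sum>j\<in>I. (p j)^2)"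
  assumes lam: "0 \<le> real k - lam" "real k - lam \<le> sqrt (real k) / 8" and s: "s \<le> real k / 4"
  shows "\<bar>poisson_binomial_pmf I p k / poisson_prob lam k - 1\<bar> \<le> 14580 * s / real k"
proof -
  define mu where "mu = (\<Sum>j\<in>I. p j * (1 - p j))"
  have kr: "1 \<le> real k" using k by simp
  have s_nonneg: "0 \<le> s" unfolding s_def by (simp add: sum_nonneg)
  have "mu = lam - s"
    unfolding mu_def lam_def s_def by (simp add: algebra_simps power2_eq_square sum_subtractf)
  hence mu: "real k / 2 \<le> mu" using lam s sqrt_le_self[OF kr] by linarith
  have mu_pos: "0 < mu" using mu kr by linarith
  hence "\<bar>poisson_binomial_pmf I p k - poisson_prob lam k\<bar> \<le> 540 * s / (mu * sqrt mu)"
    unfolding lam_def s_def mu_def by (intro poisson_binomial_pmf_local_approx I p)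
  also have "\<dots> \<le> 540 * s / (real k * sqrt (real k) / 3)"
    using mult_sqrt_ge_of_half_le[OF _ mu] mu_pos kr s_nonneg by (intro divide_left_mono mult_pos_pos) auto
  finally have "\<bar>poisson_binomial_pmf I p k - poisson_prob lam k\<bar> \<le> 1620 * s / (real k * sqrt (real k))"
    by simp
  hence "\<bar>poisson_binomial_pmf I p k / poisson_prob lam k - 1\<bar>
      \<le> (1620 * s / (real k * sqrt (real k))) / (exp (-2) / sqrt (real k))"
    using poisson_prob_near_mode_ge[OF k lam] kr by (intro abs_divide_minus_one_le) auto
  also have "\<dots> = 1620 * exp 2 * s / real k" using kr by (simp add: exp_minus field_simps)
  also have "\<dots> \<le> 1620 * 9 * s / real k"
    using exp_2_le_9 s_nonneg kr by (intro divide_right_mono mult_right_mono) auto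
  finally show ?thesis by simp
qed

section \<open>Elementary symmetric functions of a degree sequence\<close>

lemma poisson_binomial_pmf_odds:
  fixes w :: "nat \<Rightarrow> real"
  assumes I: "finite I" and w: "\<And>j. j \<in> I \<Longrightarrow> 0 \<le> w j"
  shows "poisson_binomial_pmf I (\<lambda>j. w j / (w j + 1)) k =
           (\<Sum>T\<in>{T. T \<subseteq> I \<and> card T = k}. \<Prod>j\<in>T. w j) / (\<Prod>j\<in>I. w j + 1)"
proof -
  have pos: "0 < w j + 1" if "j \<in> I" for j using w[OF that] by simp
  have "(\<Prod>j\<in>T. w j / (w j + 1)) * (\<Prod>j\<in>I-T. 1 - w j / (w j + 1)) = (\<Prod>j\<in>T. w j) / (\<Prod>j\<in>I. w j + 1)"
    if T: "T \<subseteq> I" for T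
  proof -
    have "1 - w j / (w j + 1) = 1 / (w j + 1)" if "j \<in> I" for j
      using pos[OF that] by (simp add: field_simps)
    hence "(\<Prod>j\<in>I-T. 1 - w j / (w j + 1)) = (\<Prod>j\<in>I-T. 1 / (w j + 1))"
      by (intro prod.cong) auto
    moreover have "(\<Prod>j\<in>I. w j + 1) = (\<Prod>j\<in>I-T. w j + 1) * (\<Prod>j\<in>T. w j + 1)"
      by (rule prod.subset_diff[OF T I])
    moreover have "(\<Prod>j\<in>I-T. w j + 1) > 0" "(\<Prod>j\<in>T. w j + 1) > 0"
      using pos T by (auto intro: prod_pos)
    ultimately show ?thesis by (simp add: prod_dividef)
  qed
  thus ?thesis
    unfolding poisson_binomial_pmf_def by (simp add: sum_divide_distrib)
qed

lemma poisson_binomial_pmf_const: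
  assumes I: "finite I"
  shows "poisson_binomial_pmf I (\<lambda>j. a) k = real (card I choose k) * a^k * (1 - a)^(card I - k)"
proof -
  have "poisson_binomial_pmf I (\<lambda>j. a) k = (\<Sum>T\<in>{T. T \<subseteq> I \<and> card T = k}. a^k * (1 - a)^(card I - k))"
    unfolding poisson_binomial_pmf_def
    using I by (intro sum.cong) (auto simp: card_Diff_subset finite_subset)
  thus ?thesis using n_subsets[OF I, of k] by simp
qed

lemma odds_to_prob_bounds:
  fixes w :: real assumes "0 \<le> w"
  shows "w / (w + 1) \<le> w" "0 \<le> w - w / (w + 1)" "w - w / (w + 1) \<le> w^2"
proof -
  have eq: "w - w / (w + 1) = w^2 / (w + 1)" using assms by (simp add: field_simps power2_eq_square)
  show "w / (w + 1) \<le> w" using assms by (simp add: divide_le_eq mult_le_cancel_left1)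
  show "0 \<le> w - w / (w + 1)" unfolding eq using assms by simp
  show "w - w / (w + 1) \<le> w^2" unfolding eq using assms by (simp add: divide_le_eq mult_le_cancel_left1)
qed

lemma moment_2_ge:
  assumes "is_degree_seq n d"
  shows "real n \<le> moment n d 2"
proof -
  have "real n = (\<Sum>j=1..n. real (d j))" using assms unfolding is_degree_seq_def by (metis of_nat_sum)
  also have "\<dots> \<le> (\<Sum>j=1..n. real (d j)^2)"
  proof (rule sum_mono)
    show "real (d j) \<le> real (d j)^2" for j by (cases "d j") (auto simp: power2_eq_square)
  qed
  finally show ?thesis unfolding moment_def .
qed

lemma gfun_eq_poisson_binomial_ratio:
  assumes k: "1 \<le> k" "k \<le> n"
  defines "alpha \<equiv> real k / real n"
  shows "gfun n d k = (1 - alpha) ^ (n - k) * (\<Prod>j=1..n. alpha * real (d j) + 1)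
     * (poisson_binomial_pmf {1..n} (\<lambda>j. alpha * real (d j) / (alpha * real (d j) + 1)) k
        / poisson_binomial_pmf {1..n} (\<lambda>j. alpha) k)"
proof -
  define e where "e = (\<Sum>S\<in>{S. S \<subseteq> {1..n} \<and> card S = k}. \<Prod>j\<in>S. real (d j))"
  define P where "P = (\<Prod>j=1..n. alpha * real (d j) + 1)"
  have alpha: "0 < alpha" "alpha \<le> 1" using k by (auto simp: alpha_def)
  have "(\<Sum>S\<in>{S. S \<subseteq> {1..n} \<and> card S = k}. \<Prod>j\<in>S. alpha * real (d j)) = alpha ^ k * e"
    unfolding e_def sum_distrib_left by (intro sum.cong) (auto simp: prod.distrib)
  hence QS: "poisson_binomial_pmf {1..n} (\<lambda>j. alpha * real (d j) / (alpha * real (d j) + 1)) k = alpha ^ k * e / P"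
    using poisson_binomial_pmf_odds[of "{1..n}" "\<lambda>j. alpha * real (d j)" k] alpha by (simp add: P_def)
  have QB: "poisson_binomial_pmf {1..n} (\<lambda>j. alpha) k = real (n choose k) * alpha ^ k * (1 - alpha) ^ (n - k)"
    using poisson_binomial_pmf_const[of "{1..n}" alpha k] by simp
  have "(1 - alpha) ^ (n - k) \<noteq> 0"
    using alpha k by (cases "k = n") (auto simp: alpha_def)
  moreover have "P \<noteq> 0"
    unfolding P_def using alpha by (intro prod_pos[THEN less_imp_neq, symmetric]) (auto intro: add_nonneg_pos)
  moreover have "real (n choose k) \<noteq> 0" using k by simp
  moreover have "gfun n d k = e / real (n choose k)"
    using k by (simp add: gfun_def falling_def e_def binomial_fact field_simps)
  ultimately show ?thesis using alpha unfolding QS QB P_def[symmetric] by (simp add: field_simps)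
qed

lemma tilted_degree_sum_bounds:
  fixes alpha :: real
  assumes deg: "is_degree_seq n d" and alpha: "0 \<le> alpha"
  defines "p \<equiv> \<lambda>j. alpha * real (d j) / (alpha * real (d j) + 1)"
  shows "0 \<le> alpha * real n - (\<Sum>j=1..n. p j)" "alpha * real n - (\<Sum>j=1..n. p j) \<le> alpha^2 * moment n d 2"
    "(\<Sum>j=1..n. (p j)^2) \<le> alpha^2 * moment n d 2"
proof -
  have "alpha * real n = (\<Sum>j=1..n. alpha * real (d j))"
    using deg unfolding is_degree_seq_def by (simp flip: sum_distrib_left of_nat_sum)
  hence gap: "alpha * real n - (\<Sum>j=1..n. p j) = (\<Sum>j=1..n. alpha * real (d j) - p j)"
    by (simp add: sum_subtractf)
  have w2: "alpha^2 * moment n d 2 = (\<Sum>j=1..n. (alpha * real (d j))^2)"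
    by (simp add: moment_def sum_distrib_left power_mult_distrib)
  note bounds = odds_to_prob_bounds[of "alpha * real (d j)" for j]
  show "0 \<le> alpha * real n - (\<Sum>j=1..n. p j)"
    unfolding gap unfolding p_def using bounds alpha by (intro sum_nonneg) auto
  show "alpha * real n - (\<Sum>j=1..n. p j) \<le> alpha^2 * moment n d 2"
    unfolding gap w2 unfolding p_def using bounds alpha by (intro sum_mono) auto
  show "(\<Sum>j=1..n. (p j)^2) \<le> alpha^2 * moment n d 2"
    unfolding w2 unfolding p_def using bounds alpha by (intro sum_mono power_mono) auto
qed

lemma scaled_moment_bounds:
  assumes deg: "is_degree_seq n d" and k: "1 \<le> k" "k \<le> n"
  defines "alpha \<equiv> real k / real n"
  defines "B \<equiv> real k powr (3/2) * moment n d 2 / real n ^ 2"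
  shows "alpha \<le> B" "alpha^2 * moment n d 2 = sqrt (real k) * B"
proof -
  have kr: "1 \<le> real k" and n: "real k \<le> real n" using k by auto
  have B_eq: "B = alpha * (sqrt (real k) * (moment n d 2 / real n))"
    using kr n by (simp add: B_def alpha_def powr_three_halves power2_eq_square field_simps)
  have "1 \<le> moment n d 2 / real n" using moment_2_ge[OF deg] kr n by simp
  hence "1 \<le> sqrt (real k) * (moment n d 2 / real n)"
    using kr mult_mono[of 1 "sqrt (real k)" 1 "moment n d 2 / real n"] by simp
  hence "alpha * 1 \<le> B" unfolding B_eq using kr n by (intro mult_left_mono) (auto simp: alpha_def)
  thus "alpha \<le> B" by simp
  show "alpha^2 * moment n d 2 = sqrt (real k) * B"
    unfolding B_eq using kr n by (simp add: alpha_def power2_eq_square field_simps)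
qed

lemma binomial_pmf_relative_approx:
  assumes k: "1 \<le> k" "k \<le> n" and small: "real k / real n \<le> 1/4"
  shows "\<bar>poisson_binomial_pmf {1..n} (\<lambda>j. real k / real n) k / poisson_prob (real k) k - 1\<bar>
           \<le> 14580 * (real k / real n)"
proof -
  have kr: "1 \<le> real k" and n: "real k \<le> real n" "n \<noteq> 0" using k by auto
  have sums: "real n * (real k / real n) = real k" "real n * (real k / real n)^2 = real k * (real k / real n)"
    using kr n by (simp_all add: power2_eq_square)
  have "\<bar>poisson_binomial_pmf {1..n} (\<lambda>j. real k / real n) k / poisson_prob (\<Sum>j=1..n. real k / real n) k - 1\<bar>
      \<le> 14580 * (\<Sum>j=1..n. (real k / real n)^2) / real k"
  proof (rule poisson_binomial_pmf_relative_approx[OF _ _ k(1)])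
    have "real k * (real k / real n) \<le> real k * (1/4)" using small kr by (intro mult_left_mono) auto
    thus "(\<Sum>j=1..n. (real k / real n)^2) \<le> real k / 4" by (simp add: sums)
  qed (use kr n small in \<open>simp_all add: sums\<close>)
  thus ?thesis using kr n by (simp add: sums)
qed

lemma tilted_pmf_relative_approx:
  assumes deg: "is_degree_seq n d" and k: "1 \<le> k" "k \<le> n"
  defines "alpha \<equiv> real k / real n"
  defines "lam \<equiv> (\<Sum>j=1..n. alpha * real (d j) / (alpha * real (d j) + 1))"
  assumes small: "alpha^2 * moment n d 2 \<le> sqrt (real k) / 8"
  shows "\<bar>poisson_binomial_pmf {1..n} (\<lambda>j. alpha * real (d j) / (alpha * real (d j) + 1)) k
            / poisson_prob lam k - 1\<bar> \<le> 14580 * (alpha^2 * moment n d 2) / real k"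
    "0 < poisson_prob lam k"
proof -
  have kr: "1 \<le> real k" using k by simp
  have alpha: "0 < alpha" "alpha * real n = real k" using k by (auto simp: alpha_def)
  note tilted = tilted_degree_sum_bounds[OF deg less_imp_le[OF alpha(1)], folded lam_def, unfolded alpha(2)]
  have lam_gap: "0 \<le> real k - lam" "real k - lam \<le> sqrt (real k) / 8" using tilted(1,2) small by auto
  show "\<bar>poisson_binomial_pmf {1..n} (\<lambda>j. alpha * real (d j) / (alpha * real (d j) + 1)) k
          / poisson_prob lam k - 1\<bar> \<le> 14580 * (alpha^2 * moment n d 2) / real k"
  proof (rule order_trans)
    show "\<bar>poisson_binomial_pmf {1..n} (\<lambda>j. alpha * real (d j) / (alpha * real (d j) + 1)) k
          / poisson_prob lam k - 1\<bar>
        \<le> 14580 * (\<Sum>j=1..n. (alpha * real (d j) / (alpha * real (d j) + 1))^2) / real k"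
      using lam_gap tilted(3) small sqrt_le_self[OF kr] alpha(1) unfolding lam_def
      by (intro poisson_binomial_pmf_relative_approx k(1)) (auto simp: divide_le_eq_1 add_nonneg_pos)
    show "\<dots> \<le> 14580 * (alpha^2 * moment n d 2) / real k"
      using tilted(3) kr by (intro divide_right_mono) auto
  qed
  show "0 < poisson_prob lam k"
    using poisson_prob_near_mode_ge[OF k(1) lam_gap] kr by (auto intro: less_le_trans[rotated])
qed

lemma gfun_expansion:
  assumes deg: "is_degree_seq n d" and k: "1 \<le> k" "k \<le> n"
    and small: "real k powr (3/2) * moment n d 2 / real n ^ 2 \<le> 1/30000"
  shows "\<exists>e. norm e \<le> 60000 * norm (real k powr (3/2) * moment n d 2 / real n ^ 2) \<and>
    (let alpha = real k / real n;
         lam = (\<Sum>j=1..n. alpha * real (d j) / (alpha * real (d j) + 1))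
     in gfun n d k = (1 - alpha) ^ (n - k) * (\<Prod>j=1..n. alpha * real (d j) + 1)
                       * exp (real k - lam) * (lam / real k) ^ k * (1 + e))"
proof -
  define alpha where "alpha = real k / real n"
  define lam where "lam = (\<Sum>j=1..n. alpha * real (d j) / (alpha * real (d j) + 1))"
  define B where "B = real k powr (3/2) * moment n d 2 / real n ^ 2"
  note scaled = scaled_moment_bounds[OF deg k, folded alpha_def B_def]
  have kr: "1 \<le> real k" using k by simp
  have "0 \<le> alpha" by (simp add: alpha_def)
  hence B: "0 \<le> B" "B \<le> 1/30000" using scaled(1) small by (auto simp: B_def)
  have "alpha^2 * moment n d 2 \<le> sqrt (real k) / 8" using scaled(2) B kr by simp
  note tilted = tilted_pmf_relative_approx[OF deg k this[unfolded alpha_def], folded alpha_def, folded lam_def]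
  have "14580 * (alpha^2 * moment n d 2) / real k \<le> 14580 * B"
    using scaled(2) B kr sqrt_le_self[OF kr] by (simp add: field_simps mult_left_mono)
  hence approx_S: "\<bar>poisson_binomial_pmf {1..n} (\<lambda>j. alpha * real (d j) / (alpha * real (d j) + 1)) k
           / poisson_prob lam k - 1\<bar> \<le> 14580 * B"
    using tilted(1) by linarith
  have "14580 * alpha \<le> 14580 * B" using scaled(1) by simp
  hence approx_B: "\<bar>poisson_binomial_pmf {1..n} (\<lambda>j. alpha) k / poisson_prob (real k) k - 1\<bar> \<le> 14580 * B"
    using binomial_pmf_relative_approx[OF k] scaled(1) B unfolding alpha_def by linarith
  have "0 < poisson_prob (real k) k" using kr by (simp add: poisson_prob_def)
  then obtain \<epsilon> where "\<bar>\<epsilon>\<bar> \<le> 4 * (14580 * B)"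
    and ratio: "poisson_binomial_pmf {1..n} (\<lambda>j. alpha * real (d j) / (alpha * real (d j) + 1)) k
                / poisson_binomial_pmf {1..n} (\<lambda>j. alpha) k
              = poisson_prob lam k / poisson_prob (real k) k * (1 + \<epsilon>)"
    using ratio_of_relative_approximations[OF approx_S approx_B _ tilted(2)] B by auto
  hence bound: "norm \<epsilon> \<le> 60000 * norm B" using B by simp
  have "gfun n d k = (1 - alpha) ^ (n - k) * (\<Prod>j=1..n. alpha * real (d j) + 1)
     * (poisson_binomial_pmf {1..n} (\<lambda>j. alpha * real (d j) / (alpha * real (d j) + 1)) k
        / poisson_binomial_pmf {1..n} (\<lambda>j. alpha) k)"
    unfolding alpha_def by (rule gfun_eq_poisson_binomial_ratio[OF k])
  also have "\<dots> = (1 - alpha) ^ (n - k) * (\<Prod>j=1..n. alpha * real (d j) + 1)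
                    * (exp (real k - lam) * (lam / real k) ^ k * (1 + \<epsilon>))"
    using kr by (simp only: ratio poisson_prob_divide of_nat_0_less_iff)
  finally have "gfun n d k = (1 - alpha) ^ (n - k) * (\<Prod>j=1..n. alpha * real (d j) + 1)
                    * exp (real k - lam) * (lam / real k) ^ k * (1 + \<epsilon>)"
    by (simp only: mult.assoc)
  with bound show ?thesis unfolding Let_def alpha_def lam_def B_def by blast
qed

lemma bigo_choice:
  assumes "\<forall>\<^sub>F x in F. \<exists>e. norm e \<le> c * norm (b x) \<and> P x e"
  shows "\<exists>E. E \<in> O[F](b) \<and> (\<forall>\<^sub>F x in F. P x (E x))"
proof -
  define E where "E x = (SOME e. norm e \<le> c * norm (b x) \<and> P x e)" for x
  have "\<forall>\<^sub>F x in F. norm (E x) \<le> c * norm (b x) \<and> P x (E x)"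
    using assms unfolding E_def by eventually_elim (rule someI_ex)
  hence "E \<in> O[F](b)" "\<forall>\<^sub>F x in F. P x (E x)"
    by (auto intro: landau_o.bigI[of c] elim: eventually_mono)
  thus ?thesis by blast
qed

theorem lemma3p5:
  fixes d :: "nat \<Rightarrow> nat \<Rightarrow> nat" and k :: "nat \<Rightarrow> nat"
  assumes deg: "\<And>n. is_degree_seq n (d n)"
    and kpos: "\<And>n. n \<ge> 1 \<Longrightarrow> 0 < k n" and kle: "\<And>n. k n \<le> n"
    and ksmall: "(\<lambda>n. real (k n)) \<in> o(\<lambda>n. (real n ^ 2 / moment n (d n) 2) powr (2/3))"
  shows "\<exists>E. E \<in> O(\<lambda>n. real (k n) powr (3/2) * moment n (d n) 2 / real n ^ 2) \<and>
    (\<forall>\<^sub>F n in at_top.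
      (let alpha = real (k n) / real n;
           lam = (\<Sum>j=1..n. alpha * real (d n j) / (alpha * real (d n j) + 1))
       in gfun n (d n) (k n) =
          (1 - alpha) ^ (n - k n) * (\<Prod>j=1..n. alpha * real (d n j) + 1)
          * exp (real (k n) - lam) * (lam / real (k n)) ^ (k n) * (1 + E n)))"
proof -
  have "\<forall>\<^sub>F n in at_top. real (k n) \<le> (1/30000) * (real n ^ 2 / moment n (d n) 2) powr (2/3)"
    using landau_o.smallD[OF ksmall, of "1/30000"] by simp
  hence "\<forall>\<^sub>F n in at_top. 1 \<le> k n \<and> real (k n) powr (3/2) * moment n (d n) 2 / real n ^ 2 \<le> 1/30000"
    using eventually_ge_at_top[of 1]
  proof eventually_elim
    case (elim n)
    have m2: "real n \<le> moment n (d n) 2" by (rule moment_2_ge[OF deg])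
    have "real (k n) powr (3/2) \<le> (1/30000) * (real n ^ 2 / moment n (d n) 2)"
      using elim m2 by (intro powr_three_halves_le) auto
    thus ?case using elim m2 kpos[of n] by (simp add: field_simps Suc_le_eq)
  qed
  thus ?thesis
    by (intro bigo_choice[where c = 60000], elim eventually_mono) (intro gfun_expansion deg kle; simp)
qed
end
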